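(* Let $1<p<\infty$, $0<\varepsilon<1$, let $\Omega\subset\mathbb{H}^n$ be a domain, $u$ a $p$-harmonic function in $\Omega$, $U\Subset\Omega$ a smooth domain, and let $u^\varepsilon\in C^\infty(U)$ be a solution of $$\sum_{i=1}^{2n}X_i\big[(\varepsilon+|Xv|^2)^{\frac{p-2}{2}}X_iv\big]=0\ \text{ in } U,\qquad v-u\in HW^{1,p}_0(U).$$ Then $$\Big[\frac{n}{(p-2)^2}+\frac{1}{p-2}-(n-1)\Big](\Delta_0u^\varepsilon)^2\le\frac{2n-1}{2}\Big[|D_0^2u^\varepsilon|^2-(\Delta_0u^\varepsilon)^2\Big]\quad\text{in } U,$$ where, when $p=2$, the convention $\frac10=\infty$ and $\infty\cdot 0=0$ is used.
   Context: The Heisenberg group $\mathbb{H}^n$ is $\mathbb{R}^{2n}\times\mathbb{R}$ with the group law $(x,t)\cdot(x',t')=(x+x',\,t+t'-\frac12\sum_{i=1}^n[x_ix'_{i+n}-x_{i+n}x'_i])$, with left-invariant vector fields $X_i=\partial_{x_i}-\frac{x_{i+n}}{2}\partial_t$, $X_{i+n}=\partial_{x_{i+n}}+\frac{x_i}{2}\partial_t$ ($i=1,\dots,n$). For a function $v$, $Xv=(X_1v,\dots,X_{2n}v)$, $|Xv|$ its Euclidean norm, $\Delta_0v=\sum_{i=1}^{2n}X_iX_iv$, and $D_0^2v=\big(\frac12[X_iX_jv+X_jX_iv]\big)_{i,j=1}^{2n}$ the symmetrized horizontal Hessian with $|D_0^2v|$ its Frobenius norm. $HW^{1,p}_0(U)$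 is the closure of $C^\infty_c(U)$ in the norm $(\|v\|_{L^p}^p+\||Xv|\|_{L^p}^p)^{1/p}$. A $p$-harmonic function in $\Omega$ is $u\in HW^{1,p}_{\rm loc}(\Omega)$ (i.e. $u,Xu$ locally $p$-integrable) with $\int_\Omega|Xu|^{p-2}\langle Xu,X\phi\rangle dx=0$ for all $\phi\in C^\infty_c(\Omega)$. *)

theory Defs
  imports "HOL-Analysis.Analysis"
begin

text \<open>Points of the Heisenberg group H^n = R^{2n} x R are represented as ((a,b),t) with
  a = (x_1..x_n), b = (x_{n+1}..x_{2n}), t the vertical coordinate; n = CARD('n).\<close>

type_synonym ('n) heis = "((real^('n::finite)) \<times> (real^'n)) \<times> real"

text \<open>Horizontal left-invariant vector field in horizontal direction e (e ranges over the
  standard basis of R^{2n} = real^'n x real^'n): for e = (axis i 1, 0) this is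
  X_i = d/dx_i - x_{i+n}/2 d/dt; for e = (0, axis i 1) this is X_{i+n} = d/dx_{i+n} + x_i/2 d/dt.\<close>

definition hfield :: "((real^('n::finite)) \<times> (real^'n)) \<Rightarrow> 'n heis \<Rightarrow> 'n heis" where
  "hfield e p = (e, ((snd e \<bullet> fst (fst p)) - (fst e \<bullet> snd (fst p))) / 2)"

definition hder :: "((real^('n::finite)) \<times> (real^'n)) \<Rightarrow> ('n heis \<Rightarrow> real) \<Rightarrow> 'n heis \<Rightarrow> real" where
  "hder e v p = frechet_derivative v (at p) (hfield e p)"

definition hgrad :: "(('n::finite) heis \<Rightarrow> real) \<Rightarrow> 'n heis \<Rightarrow> ((real^'n) \<times> (real^'n))" where
  "hgrad v p = (\<Sum>e\<in>Basis. hder e v p *\<^sub>R e)"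

definition hlap :: "(('n::finite) heis \<Rightarrow> real) \<Rightarrow> 'n heis \<Rightarrow> real" where
  "hlap v p = (\<Sum>e\<in>Basis. hder e (hder e v) p)"

definition hhess_sq :: "(('n::finite) heis \<Rightarrow> real) \<Rightarrow> 'n heis \<Rightarrow> real" where
  "hhess_sq v p = (\<Sum>e\<in>Basis. \<Sum>e'\<in>Basis. ((hder e (hder e' v) p + hder e' (hder e v) p) / 2)\<^sup>2)"

definition pder :: "'a::euclidean_space \<Rightarrow> ('a \<Rightarrow> real) \<Rightarrow> 'a \<Rightarrow> real" where
  "pder b f x = frechet_derivative f (at x) b"

definition smooth_on :: "'a::euclidean_space set \<Rightarrow> ('a \<Rightarrow> real) \<Rightarrow> bool" where
  "smooth_on U f \<longleftrightarrow> (\<forall>bs. set bs \<subseteq> Basis \<longrightarrow> (foldr pder bs f) differentiable_on U)"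

definition test_fun :: "'a::euclidean_space set \<Rightarrow> ('a \<Rightarrow> real) \<Rightarrow> bool" where
  "test_fun U \<phi> \<longleftrightarrow> smooth_on UNIV \<phi> \<and> compact (closure {x. \<phi> x \<noteq> 0})
      \<and> closure {x. \<phi> x \<noteq> 0} \<subseteq> U"

text \<open>g is the weak horizontal gradient of u on \<Omega> (using X_j^* = -X_j).\<close>
definition weak_hgrad :: "('n::finite) heis set \<Rightarrow> ('n heis \<Rightarrow> real) \<Rightarrow> ('n heis \<Rightarrow> (real^'n) \<times> (real^'n)) \<Rightarrow> bool" where
  "weak_hgrad \<Omega> u g \<longleftrightarrow> (\<forall>\<phi>. test_fun \<Omega> \<phi> \<longrightarrow> (\<forall>e\<in>Basis.
      (\<integral>x\<in>\<Omega>. u x * (hgrad \<phi> x \<bullet> e) \<partial>lborel) = - (\<integral>x\<in>\<Omega>. (g x \<bullet> e) * \<phi> x \<partial>lborel)))"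

definition HW_loc :: "real \<Rightarrow> ('n::finite) heis set \<Rightarrow> ('n heis \<Rightarrow> real) \<Rightarrow> ('n heis \<Rightarrow> (real^'n) \<times> (real^'n)) \<Rightarrow> bool" where
  "HW_loc p \<Omega> u g \<longleftrightarrow> set_borel_measurable lborel \<Omega> u \<and> set_borel_measurable lborel \<Omega> g
     \<and> (\<forall>K. compact K \<and> K \<subseteq> \<Omega> \<longrightarrow>
          (\<integral>\<^sup>+x\<in>K. ennreal (\<bar>u x\<bar> powr p) \<partial>lborel) < \<infinity>
        \<and> (\<integral>\<^sup>+x\<in>K. ennreal (norm (g x) powr p) \<partial>lborel) < \<infinity>)
     \<and> weak_hgrad \<Omega> u g"

definition p_harmonic :: "real \<Rightarrow> ('n::finite) heis set \<Rightarrow> ('n heis \<Rightarrow> real) \<Rightarrow> bool" where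
  "p_harmonic p \<Omega> u \<longleftrightarrow> (\<exists>g. HW_loc p \<Omega> u g \<and>
     (\<forall>\<phi>. test_fun \<Omega> \<phi> \<longrightarrow>
        (\<integral>x\<in>\<Omega>. norm (g x) powr (p - 2) * (g x \<bullet> hgrad \<phi> x) \<partial>lborel) = 0))"

definition HW0 :: "real \<Rightarrow> ('n::finite) heis set \<Rightarrow> ('n heis \<Rightarrow> real) \<Rightarrow> bool" where
  "HW0 p U w \<longleftrightarrow> (\<exists>\<phi> g. set_borel_measurable lborel U w \<and> set_borel_measurable lborel U g
     \<and> (\<forall>k. test_fun U (\<phi> k))
     \<and> ((\<lambda>k. (\<integral>\<^sup>+x\<in>U. ennreal (\<bar>\<phi> k x - w x\<bar> powr p) \<partial>lborel)
              + (\<integral>\<^sup>+x\<in>U. ennreal (norm (hgrad (\<phi> k) x - g x) powr p) \<partial>lborel)) \<longlonglongrightarrow> 0))"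

definition smooth_domain :: "'a::euclidean_space set \<Rightarrow> bool" where
  "smooth_domain U \<longleftrightarrow> open U \<and> connected U \<and> U \<noteq> {} \<and>
     (\<exists>\<rho>. smooth_on UNIV \<rho> \<and> U = {x. \<rho> x < 0} \<and>
        (\<forall>x\<in>frontier U. \<rho> x = 0 \<and> (\<exists>b\<in>Basis. pder b \<rho> x \<noteq> 0)))"

definition coef :: "real \<Rightarrow> real \<Rightarrow> ereal" where
  "coef n p = (if p = 2 then \<infinity> else ereal (n / (p - 2)\<^sup>2 + 1 / (p - 2) - (n - 1)))"

end

theory Submission
  imports Defs
begin

text \<open>At each point the smooth solution satisfies the nondivergence form
  \<open>\<Delta>\<^sub>0u (\<epsilon> + |Xu|\<^sup>2) + (p - 2) \<langle>D\<^sub>0\<^sup>2u Xu, Xu\<rangle> = 0\<close> of its equation, so the claim is an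
  inequality for a 2n \<times> 2n matrix M (the symmetrised horizontal Hessian) and a vector f (the
  horizontal gradient) with \<open>tr M \<cdot> w + q \<langle>Mf, f\<rangle> = 0\<close>, \<open>|f|\<^sup>2 < w\<close> and \<open>q = p - 2 > -1\<close>.
  For \<open>\<mu> = \<langle>Mf, f\<rangle> / |f|\<^sup>2\<close>, nonnegativity of \<open>|M + c ff\<^sup>T - l I|\<^sup>2\<close> at the optimal c, l gives
  \<open>(tr M - \<mu>)\<^sup>2 \<le> (2n - 1)(|M|\<^sup>2 - \<mu>\<^sup>2)\<close>. Since \<open>tr M = -q s \<mu>\<close> with \<open>s = |f|\<^sup>2 / w \<in> [0,1)\<close>,
  \<open>(tr M - t)\<^sup>2 + (2n - 1) t\<^sup>2\<close> does not increase when \<open>t = \<mu>\<close> is replaced by \<open>s \<mu>\<close>, which yields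
  \<open>(2n + 2q + q\<^sup>2)(s \<mu>)\<^sup>2 \<le> (2n - 1)|M|\<^sup>2\<close>: the claim rewritten in terms of \<open>tr M\<close>.\<close>

lemma hder_eq_derivative:
  assumes "(f has_derivative D) (at x)"
  shows "hder e f x = D (hfield e x)"
  using assms unfolding hder_def by (simp add: frechet_derivative_at[symmetric])

lemma hder_eq_pder:
  fixes v :: "('n::finite) heis \<Rightarrow> real"
  assumes "v differentiable (at y)"
  shows "hder e v y = pder (e, 0) v y
    + ((snd e \<bullet> fst (fst y) - fst e \<bullet> snd (fst y)) / 2) * pder ((0, 0), 1) v y"
proof -
  have lin: "linear (frechet_derivative v (at y))"
    using assms by (rule linear_frechet_derivative)
  have hf: "hfield e y = (e, 0) + ((snd e \<bullet> fst (fst y) - fst e \<bullet> snd (fst y)) / 2) *\<^sub>R ((0, 0), 1)"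
    by (simp add: hfield_def zero_prod_def)
  show ?thesis
    unfolding hder_def pder_def hf linear_add[OF lin] linear_scale[OF lin] by simp
qed

lemma differentiable_hder:
  fixes v :: "('n::finite) heis \<Rightarrow> real"
  assumes sm: "smooth_on U v" and U: "open U" and x: "x \<in> U" and e: "e \<in> Basis"
  shows "hder e v differentiable (at x)"
proof -
  have dv: "v differentiable_on U"
    using sm unfolding smooth_on_def by (metis empty_subsetI foldr_Nil id_apply list.set(1))
  have dp: "pder b v differentiable (at x)" if "b \<in> Basis" for b
  proof -
    have "set [b] \<subseteq> Basis" using that by simp
    then have "foldr pder [b] v differentiable_on U"
      using sm unfolding smooth_on_def by blast
    then show ?thesis using U x by (simp add: differentiable_on_eq_differentiable_at)
  qed
  define c where "c y = (snd e \<bullet> fst (fst y) - fst e \<bullet> snd (fst y)) / 2" for y :: "'n heis"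
  define g where "g y = pder (e, 0) v y + c y * pder ((0, 0), 1) v y" for y
  have "(c has_derivative c) (at x)"
    unfolding c_def by (auto intro!: derivative_eq_intros)
  then have "g differentiable (at x)"
    unfolding g_def using e
    by (intro differentiable_add differentiable_mult dp differentiableI)
      (auto simp: Basis_prod_def zero_prod_def[symmetric])
  then obtain D where "(g has_derivative D) (at x)"
    unfolding differentiable_def by blast
  moreover have "g y = hder e v y" if "y \<in> U" for y
  proof -
    have "v differentiable (at y)"
      using dv U that differentiable_on_eq_differentiable_at by blast
    then show ?thesis unfolding g_def c_def by (rule hder_eq_pder[symmetric])
  qed
  ultimately have "(hder e v has_derivative D) (at x)"
    by (rule has_derivative_transform_within_open[OF _ U x])
  then show ?thesis by (rule differentiableI)
qed

lemma hder_powr_mult: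
  assumes g: "g differentiable (at x)" and h: "h differentiable (at x)" and pos: "0 < g x"
  shows "hder e (\<lambda>y. g y powr r * h y) x
    = g x powr r * (hder e h x + r * hder e g x * h x / g x)"
proof -
  obtain G H where G: "(g has_derivative G) (at x)" and H: "(h has_derivative H) (at x)"
    using g h unfolding differentiable_def by blast
  have "((\<lambda>y. g y powr r * h y) has_derivative
      (\<lambda>k. g x powr r * H k + g x powr r * (0 * ln (g x) + G k * r / g x) * h x)) (at x)"
    by (intro has_derivative_mult has_derivative_powr G H has_derivative_const pos) simp
  then have "hder e (\<lambda>y. g y powr r * h y) x
    = g x powr r * H (hfield e x) + g x powr r * (G (hfield e x) * r / g x) * h x"
    by (simp add: hder_eq_derivative)
  then show ?thesis
    using hder_eq_derivative[OF G, of e] hder_eq_derivative[OF H, of e]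
    by (simp add: distrib_left)
qed

lemma hder_const_plus_sum_squares:
  assumes "finite B" and "\<And>b. b \<in> B \<Longrightarrow> h b differentiable (at x)"
  shows "hder e (\<lambda>y. c + (\<Sum>b\<in>B. (h b y)\<^sup>2)) x = (\<Sum>b\<in>B. 2 * h b x * hder e (h b) x)"
proof -
  define D where "D b = frechet_derivative (h b) (at x)" for b
  have "(h b has_derivative D b) (at x)" if "b \<in> B" for b
    unfolding D_def using assms(2)[OF that] by (rule frechet_derivative_works[THEN iffD1])
  then have "((\<lambda>y. c + (\<Sum>b\<in>B. (h b y)\<^sup>2)) has_derivative
      (\<lambda>k. 0 + (\<Sum>b\<in>B. of_nat 2 * (h b x) ^ (2 - 1) * D b k))) (at x)"
    by (intro has_derivative_add has_derivative_const has_derivative_sum)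
      (auto intro!: has_derivative_eq_rhs[OF has_derivative_power])
  from hder_eq_derivative[OF this, of e] show ?thesis
    by (simp add: hder_def D_def mult.assoc)
qed

lemma norm_hgrad_sq: "(norm (hgrad v y))\<^sup>2 = (\<Sum>b\<in>Basis. (hder b v y)\<^sup>2)"
proof -
  have "(norm (hgrad v y))\<^sup>2 = (\<Sum>b\<in>Basis. (hgrad v y \<bullet> b) * (hgrad v y \<bullet> b))"
    unfolding power2_norm_eq_inner by (rule euclidean_inner)
  also have "\<dots> = (\<Sum>b\<in>Basis. (hder b v y)\<^sup>2)"
    by (intro sum.cong) (auto simp: hgrad_def power2_eq_square)
  finally show ?thesis .
qed

lemma regularized_p_laplacian_nondivergence:
  fixes v :: "('n::finite) heis \<Rightarrow> real"
  assumes "smooth_on U v" and "open U" and "x \<in> U" and "0 < \<epsilon>"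
  shows "(\<Sum>e\<in>Basis. hder e (\<lambda>y. (\<epsilon> + (norm (hgrad v y))\<^sup>2) powr ((p - 2) / 2) * hder e v y) x) = 0
    \<longleftrightarrow> hlap v x * (\<epsilon> + (norm (hgrad v x))\<^sup>2)
        + (p - 2) * (\<Sum>i\<in>Basis. \<Sum>j\<in>Basis. hder i v x * hder j v x * hder i (hder j v) x) = 0"
proof -
  define g where "g y = \<epsilon> + (norm (hgrad v y))\<^sup>2" for y
  define r where "r = (p - 2) / 2"
  define S where "S e = (\<Sum>j\<in>Basis. hder e v x * hder j v x * hder e (hder j v) x)" for e
  have dv: "hder b v differentiable (at x)" if "b \<in> Basis" for b
    using differentiable_hder assms(1-3) that .
  have g_pos: "0 < g x"
    unfolding g_def using \<open>0 < \<epsilon>\<close> by (simp add: add_pos_nonneg)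
  have gd: "g differentiable (at x)"
    unfolding g_def norm_hgrad_sq using dv by simp
  have flux: "hder e (\<lambda>y. g y powr r * hder e v y) x
      = g x powr r * (hder e (hder e v) x + (p - 2) * S e / g x)" if "e \<in> Basis" for e
  proof -
    have "hder e g x = (\<Sum>j\<in>Basis. 2 * hder j v x * hder e (hder j v) x)"
      unfolding g_def norm_hgrad_sq by (rule hder_const_plus_sum_squares[OF finite_Basis dv])
    then have "r * hder e g x * hder e v x = (p - 2) * S e"
      unfolding S_def r_def by (simp add: sum_distrib_left sum_distrib_right mult_ac)
    then show ?thesis
      using hder_powr_mult[OF gd dv[OF that] g_pos, of e r] by simp
  qed
  have "(\<Sum>e\<in>Basis. hder e (\<lambda>y. g y powr r * hder e v y) x)
      = g x powr r * (hlap v x + (p - 2) * (\<Sum>e\<in>Basis. S e) / g x)"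
    by (simp add: flux hlap_def distrib_left sum.distrib sum_distrib_left sum_divide_distrib)
  also have "\<dots> = g x powr r / g x * (hlap v x * g x + (p - 2) * (\<Sum>e\<in>Basis. S e))"
    using g_pos by (simp add: field_simps)
  finally have "(\<Sum>e\<in>Basis. hder e (\<lambda>y. g y powr r * hder e v y) x) = 0
      \<longleftrightarrow> hlap v x * g x + (p - 2) * (\<Sum>e\<in>Basis. S e) = 0"
    using g_pos by simp
  then show ?thesis
    unfolding g_def S_def r_def .
qed

lemma frobenius_sq_rank_one_shift:
  fixes M :: "'a \<Rightarrow> 'a \<Rightarrow> real" and f :: "'a \<Rightarrow> real"
  assumes "finite B"
  shows "(\<Sum>i\<in>B. \<Sum>j\<in>B. (M i j + c * (f i * f j) - l * (if i = j then 1 else 0))\<^sup>2)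
    = (\<Sum>i\<in>B. \<Sum>j\<in>B. (M i j)\<^sup>2) + c\<^sup>2 * (\<Sum>i\<in>B. (f i)\<^sup>2)\<^sup>2 + real (card B) * l\<^sup>2
      + 2 * c * (\<Sum>i\<in>B. \<Sum>j\<in>B. f i * f j * M i j) - 2 * l * (\<Sum>i\<in>B. M i i)
      - 2 * c * l * (\<Sum>i\<in>B. (f i)\<^sup>2)"
proof -
  have entry: "(M i j + c * (f i * f j) - l * (if i = j then 1 else 0))\<^sup>2
     = (M i j)\<^sup>2 + c\<^sup>2 * ((f i)\<^sup>2 * (f j)\<^sup>2) + 2 * c * (f i * f j * M i j)
       + (if i = j then l\<^sup>2 - 2 * l * M i i - 2 * c * l * (f i)\<^sup>2 else 0)" for i j
    by (auto simp: power2_eq_square algebra_simps)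
  have "(\<Sum>i\<in>B. (f i)\<^sup>2)\<^sup>2 = (\<Sum>i\<in>B. \<Sum>j\<in>B. (f i)\<^sup>2 * (f j)\<^sup>2)"
    by (simp add: power2_eq_square[of "sum _ _"] sum_product)
  then show ?thesis
    unfolding entry
    by (simp add: sum.distrib sum_distrib_left sum_subtractf assms algebra_simps)
qed

lemma trace_deviation_le_frobenius:
  fixes M :: "'a \<Rightarrow> 'a \<Rightarrow> real" and f :: "'a \<Rightarrow> real"
  assumes "finite B" and "2 \<le> card B" and "0 < (\<Sum>i\<in>B. (f i)\<^sup>2)"
  defines "\<mu> \<equiv> (\<Sum>i\<in>B. \<Sum>j\<in>B. f i * f j * M i j) / (\<Sum>i\<in>B. (f i)\<^sup>2)"
  shows "((\<Sum>i\<in>B. M i i) - \<mu>)\<^sup>2 \<le> (real (card B) - 1) * ((\<Sum>i\<in>B. \<Sum>j\<in>B. (M i j)\<^sup>2) - \<mu>\<^sup>2)"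
proof -
  define F where "F = (\<Sum>i\<in>B. \<Sum>j\<in>B. (M i j)\<^sup>2)"
  define S where "S = (\<Sum>i\<in>B. (f i)\<^sup>2)"
  define a where "a = (\<Sum>i\<in>B. M i i)"
  define N where "N = real (card B)"
  define l where "l = (a - \<mu>) / (N - 1)"
  define c where "c = (l - \<mu>) / S"
  have N: "1 < N" using assms(2) unfolding N_def by simp
  have cS: "c * S = l - \<mu>" and PS: "(\<Sum>i\<in>B. \<Sum>j\<in>B. f i * f j * M i j) = \<mu> * S"
    using assms(3) unfolding c_def \<mu>_def S_def by simp_all
  \<comment> \<open>\<open>|M + c ff\<^sup>T - l I|\<^sup>2 \<ge> 0\<close> with c, l chosen to minimise this quadratic polynomial\<close>
  have "0 \<le> (\<Sum>i\<in>B. \<Sum>j\<in>B. (M i j + c * (f i * f j) - l * (if i = j then 1 else 0))\<^sup>2)"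
    by (intro sum_nonneg) auto
  also have "\<dots> = F + (c * S)\<^sup>2 + N * l\<^sup>2 + 2 * (c * S) * \<mu> - 2 * l * a - 2 * (c * S) * l"
    unfolding frobenius_sq_rank_one_shift[OF assms(1)] PS
    by (simp add: F_def S_def N_def a_def power_mult_distrib algebra_simps)
  also have "\<dots> = F - \<mu>\<^sup>2 + (N - 1) * l\<^sup>2 - 2 * l * (a - \<mu>)"
    unfolding cS by (simp add: power2_eq_square algebra_simps)
  finally have "0 \<le> (N - 1) * (F - \<mu>\<^sup>2 + (N - 1) * l\<^sup>2 - 2 * l * (a - \<mu>))"
    using N by simp
  also have "\<dots> = (N - 1) * (F - \<mu>\<^sup>2) + ((N - 1) * l)\<^sup>2 - 2 * ((N - 1) * l) * (a - \<mu>)"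
    by (simp add: power2_eq_square algebra_simps)
  also have "(N - 1) * l = a - \<mu>"
    unfolding l_def using N by simp
  finally show ?thesis
    unfolding F_def a_def N_def by (simp add: power2_eq_square algebra_simps)
qed

lemma trace_sq_bound_of_constraint:
  fixes M :: "'a \<Rightarrow> 'a \<Rightarrow> real" and f :: "'a \<Rightarrow> real" and n :: nat and q w :: real
  assumes "finite B" and "card B = 2 * n" and "1 \<le> n"
    and "(\<Sum>i\<in>B. (f i)\<^sup>2) < w" and "-1 < q" and "q \<noteq> 0"
    and "(\<Sum>i\<in>B. M i i) * w + q * (\<Sum>i\<in>B. \<Sum>j\<in>B. f i * f j * M i j) = 0"
  shows "(real n / q\<^sup>2 + 1 / q - (real n - 1)) * (\<Sum>i\<in>B. M i i)\<^sup>2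
    \<le> (2 * real n - 1) / 2 * ((\<Sum>i\<in>B. \<Sum>j\<in>B. (M i j)\<^sup>2) - (\<Sum>i\<in>B. M i i)\<^sup>2)"
proof -
  define F where "F = (\<Sum>i\<in>B. \<Sum>j\<in>B. (M i j)\<^sup>2)"
  define S where "S = (\<Sum>i\<in>B. (f i)\<^sup>2)"
  define P where "P = (\<Sum>i\<in>B. \<Sum>j\<in>B. f i * f j * M i j)"
  define a where "a = (\<Sum>i\<in>B. M i i)"
  define m where "m = P / w"
  have S_nonneg: "0 \<le> S" and F_nonneg: "0 \<le> F"
    unfolding S_def F_def by (simp_all add: sum_nonneg)
  then have w: "0 < w" using assms(4) unfolding S_def by linarith
  then have a: "a = - q * m"
    using assms(7) unfolding a_def m_def P_def by (simp add: field_simps)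
  have key: "(2 * real n + 2 * q + q\<^sup>2) * m\<^sup>2 \<le> (2 * real n - 1) * F"
  proof (cases "S = 0")
    case True
    then have "P = 0"
      using assms(1) unfolding S_def P_def by (simp add: sum_nonneg_eq_0_iff)
    then show ?thesis using F_nonneg assms(3) by (simp add: m_def)
  next
    case False
    then have S: "0 < S" using S_nonneg by simp
    define \<mu> where "\<mu> = P / S"
    define s where "s = S / w"
    have s: "0 < s" "s < 1" using S w assms(4) unfolding s_def S_def by simp_all
    have m: "m = s * \<mu>" unfolding m_def s_def \<mu>_def using S by simp
    have "(2 * real n + 2 * q + q\<^sup>2) * m\<^sup>2 = (a - m)\<^sup>2 + (2 * real n - 1) * m\<^sup>2"
      unfolding a by (simp add: power2_eq_square algebra_simps)
    also have "\<dots> \<le> (a - \<mu>)\<^sup>2 + (2 * real n - 1) * \<mu>\<^sup>2"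
    proof -
      have "(a - \<mu>)\<^sup>2 + (2 * real n - 1) * \<mu>\<^sup>2 - ((a - m)\<^sup>2 + (2 * real n - 1) * m\<^sup>2)
          = (1 - s) * \<mu>\<^sup>2 * (2 * ((real n - 1) * (1 + s)) + 2 * ((q + 1) * s) + 2)"
        unfolding a m by (simp add: power2_eq_square algebra_simps)
      moreover have "0 \<le> (real n - 1) * (1 + s)" and "0 \<le> (q + 1) * s"
        using s assms(3,5) by simp_all
      then have "0 \<le> 2 * ((real n - 1) * (1 + s)) + 2 * ((q + 1) * s) + 2"
        by linarith
      then have "0 \<le> (1 - s) * \<mu>\<^sup>2 * (2 * ((real n - 1) * (1 + s)) + 2 * ((q + 1) * s) + 2)"
        using s by (intro mult_nonneg_nonneg) auto
      ultimately show ?thesis by linarith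
    qed
    also have "\<dots> \<le> (2 * real n - 1) * F"
      using trace_deviation_le_frobenius[OF assms(1) _ S[unfolded S_def], of M] assms(2,3)
      unfolding a_def F_def \<mu>_def P_def S_def by (simp add: algebra_simps)
    finally show ?thesis .
  qed
  have "(2 * real n - 1) / 2 * (F - a\<^sup>2) - (real n / q\<^sup>2 + 1 / q - (real n - 1)) * a\<^sup>2
      = ((2 * real n - 1) * F - (2 * real n + 2 * q + q\<^sup>2) * m\<^sup>2) / 2"
    unfolding a using assms(6) by (simp add: field_simps power2_eq_square)
  with key show ?thesis
    unfolding F_def a_def by simp
qed

lemma coef_trace_sq_le:
  fixes M :: "'a \<Rightarrow> 'a \<Rightarrow> real" and f :: "'a \<Rightarrow> real" and n :: nat and p w :: real
  assumes "finite B" and "card B = 2 * n" and "1 \<le> n"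
    and "(\<Sum>i\<in>B. (f i)\<^sup>2) < w" and "1 < p"
    and "(\<Sum>i\<in>B. M i i) * w + (p - 2) * (\<Sum>i\<in>B. \<Sum>j\<in>B. f i * f j * M i j) = 0"
  shows "coef (real n) p * ereal ((\<Sum>i\<in>B. M i i)\<^sup>2)
    \<le> ereal ((2 * real n - 1) / 2 * ((\<Sum>i\<in>B. \<Sum>j\<in>B. (M i j)\<^sup>2) - (\<Sum>i\<in>B. M i i)\<^sup>2))"
proof (cases "p = 2")
  case True
  have "0 \<le> (\<Sum>i\<in>B. (f i)\<^sup>2)" by (simp add: sum_nonneg)
  then have "(\<Sum>i\<in>B. M i i) = 0"
    using assms(4,6) True by simp
  moreover have "0 \<le> (2 * real n - 1) / 2 * (\<Sum>i\<in>B. \<Sum>j\<in>B. (M i j)\<^sup>2)"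
    using assms(3) by (simp add: sum_nonneg)
  \<comment> \<open>\<open>\<infinity> \<cdot> 0 = 0\<close> in \<open>ereal\<close>\<close>
  ultimately show ?thesis
    by (simp add: zero_ereal_def[symmetric])
next
  case False
  then show ?thesis
    using trace_sq_bound_of_constraint[OF assms(1-4), of "p - 2" M] assms(5,6)
    by (simp add: coef_def)
qed

lemma quadratic_form_symmetrize:
  fixes H :: "'a \<Rightarrow> 'a \<Rightarrow> real"
  shows "(\<Sum>i\<in>B. \<Sum>j\<in>B. f i * f j * ((H i j + H j i) / 2)) = (\<Sum>i\<in>B. \<Sum>j\<in>B. f i * f j * H i j)"
proof -
  have "(\<Sum>i\<in>B. \<Sum>j\<in>B. f i * f j * H j i) = (\<Sum>i\<in>B. \<Sum>j\<in>B. f i * f j * H i j)"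
    by (subst sum.swap) (simp add: mult.commute)
  then show ?thesis
    by (simp add: distrib_left add_divide_distrib sum.distrib sum_divide_distrib[symmetric])
qed

theorem lemma3p1:
  fixes p \<epsilon> :: real and \<Omega> U :: "('n::finite) heis set" and u ue :: "'n heis \<Rightarrow> real"
  assumes "1 < p" and "0 < \<epsilon>" and "\<epsilon> < 1"
    and "open \<Omega>" and "connected \<Omega>" and "\<Omega> \<noteq> {}"
    and "p_harmonic p \<Omega> u"
    and "smooth_domain U" and "compact (closure U)" and "closure U \<subseteq> \<Omega>"
    and "smooth_on U ue"
    and "\<forall>x\<in>U. (\<Sum>e\<in>Basis. hder e (\<lambda>y. (\<epsilon> + (norm (hgrad ue y))\<^sup>2) powr ((p - 2) / 2) * hder e ue y) x) = 0"
    and "HW0 p U (\<lambda>x. ue x - u x)"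
  shows "\<forall>x\<in>U. coef (real CARD('n)) p * ereal ((hlap ue x)\<^sup>2)
           \<le> ereal ((2 * real CARD('n) - 1) / 2 * (hhess_sq ue x - (hlap ue x)\<^sup>2))"
proof
  fix x assume x: "x \<in> U"
  define H where "H i j = hder i (hder j ue) x" for i j :: "(real^'n) \<times> (real^'n)"
  define M where "M i j = (H i j + H j i) / 2" for i j
  define f where "f i = hder i ue x" for i
  have trace: "hlap ue x = (\<Sum>i\<in>Basis. M i i)"
    by (simp add: hlap_def M_def H_def)
  have "open U" using \<open>smooth_domain U\<close> by (simp add: smooth_domain_def)
  then have "hlap ue x * (\<epsilon> + (\<Sum>i\<in>Basis. (f i)\<^sup>2))
      + (p - 2) * (\<Sum>i\<in>Basis. \<Sum>j\<in>Basis. f i * f j * H i j) = 0"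
    using regularized_p_laplacian_nondivergence[OF \<open>smooth_on U ue\<close> _ x \<open>0 < \<epsilon>\<close>] assms(12) x
    unfolding f_def H_def norm_hgrad_sq by blast
  then have "(\<Sum>i\<in>Basis. M i i) * (\<epsilon> + (\<Sum>i\<in>Basis. (f i)\<^sup>2))
      + (p - 2) * (\<Sum>i\<in>Basis. \<Sum>j\<in>Basis. f i * f j * M i j) = 0"
    unfolding trace[symmetric] by (simp only: M_def quadratic_form_symmetrize)
  then have "coef (real CARD('n)) p * ereal ((\<Sum>i\<in>Basis. M i i)\<^sup>2)
      \<le> ereal ((2 * real CARD('n) - 1) / 2 * ((\<Sum>i\<in>Basis. \<Sum>j\<in>Basis. (M i j)\<^sup>2) - (\<Sum>i\<in>Basis. M i i)\<^sup>2))"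
    using \<open>0 < \<epsilon>\<close> by (intro coef_trace_sq_le[OF finite_Basis _ _ _ \<open>1 < p\<close>]) simp_all
  moreover have "hhess_sq ue x = (\<Sum>i\<in>Basis. \<Sum>j\<in>Basis. (M i j)\<^sup>2)"
    by (simp add: hhess_sq_def M_def H_def)
  ultimately show "coef (real CARD('n)) p * ereal ((hlap ue x)\<^sup>2)
      \<le> ereal ((2 * real CARD('n) - 1) / 2 * (hhess_sq ue x - (hlap ue x)\<^sup>2))"
    unfolding trace by simp
qed

end
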